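(* Let $G=(V,E)$ be a $K_4$-free graph and $T=(V,E_t)$ a spanning tree of $G$ such that for every edge $uv\in E$ and every $w\in P_T(u,v)$ we have $uw,vw\in E$. Let $\mathcal C$ be an induced chordless cycle $C_k$ in $G$ with $k\ge 4$, with vertices $c_1,\dots,c_k$. Then there is a vertex $w\notin\{c_1,\dots,c_k\}$ adjacent to all of $c_1,\dots,c_k$ (so $\mathcal C$ and $w$ form a wheel $W_k$), and no edge of $\mathcal C$ belongs to $E_t$.
   Context: All graphs are finite, simple, undirected and connected. For a tree $T$ and vertices $u,v$, $P_T(u,v)$ denotes the set of vertices on the path from $u$ to $v$ in $T$ excluding $u$ and $v$. A chordless cycle $C_k$ consists of vertices $v_1,\dots,v_k$ with edges exactly $v_iv_{i+1}$ (indices mod $k$) among them. A wheel $W_k$ is a $C_k$ plus a vertex adjacent to all its vertices. $K_4$-free means no clique on four vertices. *)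

theory Defs
  imports Main
begin

definition sgraph :: "'a set \<Rightarrow> ('a \<Rightarrow> 'a \<Rightarrow> bool) \<Rightarrow> bool" where
  "sgraph V E \<longleftrightarrow> finite V \<and> (\<forall>u v. E u v \<longrightarrow> u \<in> V \<and> v \<in> V)
     \<and> (\<forall>u v. E u v \<longrightarrow> E v u) \<and> (\<forall>u. \<not> E u u)"

definition walk :: "('a \<Rightarrow> 'a \<Rightarrow> bool) \<Rightarrow> 'a list \<Rightarrow> bool" where
  "walk E xs \<longleftrightarrow> xs \<noteq> [] \<and> (\<forall>i. Suc i < length xs \<longrightarrow> E (xs ! i) (xs ! Suc i))"

definition connected_graph :: "'a set \<Rightarrow> ('a \<Rightarrow> 'a \<Rightarrow> bool) \<Rightarrow> bool" where
  "connected_graph V E \<longleftrightarrow> V \<noteq> {} \<and>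
     (\<forall>u\<in>V. \<forall>v\<in>V. \<exists>xs. walk E xs \<and> hd xs = u \<and> last xs = v)"

definition is_cycle :: "('a \<Rightarrow> 'a \<Rightarrow> bool) \<Rightarrow> 'a list \<Rightarrow> bool" where
  "is_cycle E xs \<longleftrightarrow> length xs \<ge> 3 \<and> distinct xs \<and> walk E xs \<and> E (last xs) (hd xs)"

definition is_tree :: "'a set \<Rightarrow> ('a \<Rightarrow> 'a \<Rightarrow> bool) \<Rightarrow> bool" where
  "is_tree V T \<longleftrightarrow> sgraph V T \<and> connected_graph V T \<and> \<not> (\<exists>xs. is_cycle T xs)"

definition spanning_tree :: "'a set \<Rightarrow> ('a \<Rightarrow> 'a \<Rightarrow> bool) \<Rightarrow> ('a \<Rightarrow> 'a \<Rightarrow> bool) \<Rightarrow> bool" where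
  "spanning_tree V E T \<longleftrightarrow> is_tree V T \<and> (\<forall>u v. T u v \<longrightarrow> E u v)"

definition tree_path_inner :: "('a \<Rightarrow> 'a \<Rightarrow> bool) \<Rightarrow> 'a \<Rightarrow> 'a \<Rightarrow> 'a set" where
  "tree_path_inner T u v = {w. \<exists>xs. walk T xs \<and> distinct xs \<and> hd xs = u \<and> last xs = v
       \<and> w \<in> set xs \<and> w \<noteq> u \<and> w \<noteq> v}"

definition K4_free :: "('a \<Rightarrow> 'a \<Rightarrow> bool) \<Rightarrow> bool" where
  "K4_free E \<longleftrightarrow> \<not> (\<exists>a b c d. E a b \<and> E a c \<and> E a d \<and> E b c \<and> E b d \<and> E c d)"

definition induced_cycle :: "'a set \<Rightarrow> ('a \<Rightarrow> 'a \<Rightarrow> bool) \<Rightarrow> 'a list \<Rightarrow> bool" where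
  "induced_cycle V E cs \<longleftrightarrow> length cs \<ge> 3 \<and> distinct cs \<and> set cs \<subseteq> V \<and>
     (\<forall>i<length cs. \<forall>j<length cs. E (cs ! i) (cs ! j) \<longleftrightarrow>
         (j = Suc i mod length cs \<or> i = Suc j mod length cs))"

end

theory Submission
  imports Defs "HOL-Library.Transitive_Closure_Table"
begin

text \<open>
  Every edge uv of G that is not a tree edge has a tree path of exactly
  two edges: a longer tree path would contain two adjacent interior vertices, both
  adjacent to u and v, giving a K4.  So consecutive cycle vertices c_j, c_(j+1) are
  joined in T either directly or through a "midpoint" m_j, and m_j lies off the
  cycle because the cycle is induced and has length at least 4.

  Acyclicity of T is used in one form only: a tree edge xy is a bridge, i.e. y cannot
  reach x in T once the edge xy is removed.  If c_i c_(i+1) were a tree edge, going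
  around the rest of the cycle would reach c_i from c_(i+1) without it; so all cycle
  edges have midpoints.  If two consecutive midpoints m_i, m_(i+1) differed, the walk
  m_(i+1), c_(i+2), ..., c_i, m_i, c_(i+1) would bypass the tree edge c_(i+1) m_(i+1).
  Hence all midpoints coincide, and this common vertex is the hub of a wheel.
\<close>

lemma walk_Cons2: "walk R (a # b # xs) \<longleftrightarrow> R a b \<and> walk R (b # xs)"
  unfolding walk_def by (auto simp: nth_Cons split: nat.splits)

lemma walk_mono: "walk R xs \<Longrightarrow> (\<And>a b. R a b \<Longrightarrow> S a b) \<Longrightarrow> walk S xs"
  unfolding walk_def by auto

lemma walk_rtranclp: "walk R xs \<Longrightarrow> R\<^sup>*\<^sup>* (hd xs) (last xs)"
proof (induction xs)
  case Nil
  then show ?case by (simp add: walk_def)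
next
  case (Cons a xs)
  show ?case
  proof (cases xs)
    case Nil
    then show ?thesis by simp
  next
    case (Cons b ys)
    then show ?thesis using Cons.prems Cons.IH
      by (auto simp: walk_Cons2 intro: converse_rtranclp_into_rtranclp)
  qed
qed

lemma rtrancl_path_walk: "rtrancl_path R x xs y \<Longrightarrow> walk R (x # xs) \<and> last (x # xs) = y"
proof (induction rule: rtrancl_path.induct)
  case (base x)
  then show ?case by (simp add: walk_def)
next
  case (step x y ys z)
  then show ?case by (simp add: walk_Cons2)
qed

lemma rtranclp_path:
  assumes "R\<^sup>*\<^sup>* a b"
  obtains ys where "walk R ys" "distinct ys" "hd ys = a" "last ys = b"
proof -
  obtain xs where "rtrancl_path R a xs b"
    using assms by (auto simp: rtranclp_eq_rtrancl_path)
  then obtain xs' where "rtrancl_path R a xs' b" "distinct (a # xs')"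
    by (rule rtrancl_path_distinct)
  then show thesis using that[of "a # xs'"] rtrancl_path_walk by fastforce
qed

lemma rtranclp_chain:
  assumes "\<And>n. n < N \<Longrightarrow> R\<^sup>*\<^sup>* (f n) (f (Suc n))"
  shows "R\<^sup>*\<^sup>* (f 0) (f N)"
  using assms by (induction N) (auto intro: rtranclp_trans)

section \<open>Tree edges are bridges\<close>

definition remove_edge :: "('a \<Rightarrow> 'a \<Rightarrow> bool) \<Rightarrow> 'a \<Rightarrow> 'a \<Rightarrow> 'a \<Rightarrow> 'a \<Rightarrow> bool" where
  "remove_edge T x y a b \<longleftrightarrow> T a b \<and> {a, b} \<noteq> {x, y}"

text \<open>In a graph without cycles, the ends of an edge are disconnected once it is removed:
  a path from y back to x avoiding xy would close a cycle with that edge.\<close>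
lemma acyclic_edge_is_bridge:
  assumes acyclic: "\<not> (\<exists>xs. is_cycle T xs)" and "T x y" "x \<noteq> y"
  shows "\<not> (remove_edge T x y)\<^sup>*\<^sup>* y x"
proof
  assume "(remove_edge T x y)\<^sup>*\<^sup>* y x"
  then obtain ys where ys: "walk (remove_edge T x y) ys" "distinct ys" "hd ys = y" "last ys = x"
    by (rule rtranclp_path)
  have "length ys \<ge> 3"
  proof (rule ccontr)
    assume "\<not> length ys \<ge> 3"
    then consider "ys = []" | a where "ys = [a]" | a b where "ys = [a, b]"
      by (cases ys; cases "tl ys"; cases "tl (tl ys)") auto
    then show False
      using ys \<open>x \<noteq> y\<close> by cases (auto simp: walk_def walk_Cons2 remove_edge_def)
  qed
  moreover have "walk T ys" using ys(1) by (rule walk_mono) (simp add: remove_edge_def)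
  ultimately have "is_cycle T ys" using ys \<open>T x y\<close> by (simp add: is_cycle_def)
  then show False using acyclic by blast
qed

section \<open>Non-tree edges have a tree midpoint\<close>

lemma nontree_edge_midpoint:
  assumes "sgraph V E" "K4_free E" "spanning_tree V E T"
    and path_adj: "\<forall>u v w. E u v \<longrightarrow> w \<in> tree_path_inner T u v \<longrightarrow> E u w \<and> E v w"
    and "E u v" "\<not> T u v"
  shows "\<exists>m. T u m \<and> T m v"
proof -
  have uv: "u \<in> V" "v \<in> V" "u \<noteq> v" using assms(1,5) unfolding sgraph_def by metis+
  have TE: "\<And>a b. T a b \<Longrightarrow> E a b" using assms(3) by (simp add: spanning_tree_def)
  obtain xs where "walk T xs" "hd xs = u" "last xs = v"
    using assms(3) uv unfolding spanning_tree_def is_tree_def connected_graph_def by blast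
  then have "T\<^sup>*\<^sup>* u v" using walk_rtranclp by metis
  then obtain ys where ys: "walk T ys" "distinct ys" "hd ys = u" "last ys = v"
    by (rule rtranclp_path)
  have ne: "ys \<noteq> []" using ys(1) by (simp add: walk_def)
  have first: "ys ! 0 = u" and final: "ys ! (length ys - 1) = v"
    using ys ne by (simp_all add: hd_conv_nth last_conv_nth)
  have step: "\<And>i. Suc i < length ys \<Longrightarrow> T (ys ! i) (ys ! Suc i)"
    using ys(1) by (simp add: walk_def)
  have interior: "ys ! i \<in> tree_path_inner T u v" if "0 < i" "i < length ys - 1" for i
  proof -
    have i: "i < length ys" and bounds: "0 < length ys" "length ys - 1 < length ys"
      using that by auto
    have "ys ! i \<noteq> ys ! 0"
      using nth_eq_iff_index_eq[OF ys(2) i bounds(1)] that(1) by simp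
    moreover have "ys ! i \<noteq> ys ! (length ys - 1)"
      using nth_eq_iff_index_eq[OF ys(2) i bounds(2)] that(2) by simp
    ultimately have "ys ! i \<noteq> u" "ys ! i \<noteq> v" unfolding first final .
    moreover have "ys ! i \<in> set ys" using i by (rule nth_mem)
    ultimately show ?thesis unfolding tree_path_inner_def using ys(1-4) by blast
  qed
  have "length ys \<noteq> 1" using first final uv by auto
  moreover have "length ys \<noteq> 2" using step[of 0] first final assms(6) by auto
  moreover have "\<not> length ys \<ge> 4"
  proof
    assume long: "length ys \<ge> 4"
    have "ys!1 \<in> tree_path_inner T u v" "ys!2 \<in> tree_path_inner T u v"
      using interior long by simp_all
    then have "E u (ys!1)" "E v (ys!1)" "E u (ys!2)" "E v (ys!2)"
      using path_adj \<open>E u v\<close> by blast+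
    moreover have "E (ys!1) (ys!2)" using TE step[of 1] long by (simp add: numeral_2_eq_2)
    ultimately show False using assms(2,5) unfolding K4_free_def by blast
  qed
  ultimately have "length ys = 3" using ne by (cases "length ys") auto
  then show ?thesis using step[of 0] step[of 1] first final by (auto simp: numeral_2_eq_2)
qed

definition cyc :: "'a list \<Rightarrow> nat \<Rightarrow> 'a" where
  "cyc cs n = cs ! (n mod length cs)"

lemma mod_add_offset_neq: "0 < d \<Longrightarrow> d < (k::nat) \<Longrightarrow> (a + d) mod k \<noteq> a mod k"
  by (metis add_diff_cancel_left' dvd_imp_le leD mod_eq_dvd_iff_nat le_add1)

context
  fixes V E cs
  assumes induced: "induced_cycle V E cs"
begin

private lemma nonempty: "0 < length cs"
  using induced by (auto simp: induced_cycle_def)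

lemma cyc_in_set: "cyc cs n \<in> set cs"
  using nonempty by (simp add: cyc_def)

lemma set_eq_range_cyc: "x \<in> set cs \<Longrightarrow> \<exists>l. x = cyc cs l"
  by (metis cyc_def in_set_conv_nth mod_less)

lemma cyc_period: "cyc cs (n + length cs) = cyc cs n"
  by (simp add: cyc_def)

lemma cyc_eq_iff: "cyc cs a = cyc cs b \<longleftrightarrow> a mod length cs = b mod length cs"
  using induced nonempty by (simp add: cyc_def induced_cycle_def nth_eq_iff_index_eq)

lemma cyc_adj_iff:
  "E (cyc cs a) (cyc cs b) \<longleftrightarrow>
     b mod length cs = Suc a mod length cs \<or> a mod length cs = Suc b mod length cs"
  using induced nonempty by (simp add: cyc_def induced_cycle_def mod_Suc_eq)

lemma cyc_adj: "E (cyc cs n) (cyc cs (Suc n))"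
  by (simp add: cyc_adj_iff)

lemma cyc_edge_eq:
  assumes "{cyc cs a, cyc cs (Suc a)} = {cyc cs b, cyc cs (Suc b)}"
  shows "a mod length cs = b mod length cs"
proof -
  have "length cs \<ge> 3" using induced by (simp add: induced_cycle_def)
  moreover have "a mod length cs < length cs" "b mod length cs < length cs"
    using nonempty by simp_all
  ultimately show ?thesis using assms
    by (auto simp: doubleton_eq_iff cyc_eq_iff mod_Suc split: if_splits)
qed

lemma common_neighbour_off_cycle:
  assumes "length cs \<ge> 4" "E m (cyc cs a)" "E m (cyc cs (Suc a))"
  shows "m \<notin> set cs"
proof
  assume "m \<in> set cs"
  then obtain l where l: "l < length cs" "m = cyc cs l"
    by (metis cyc_def in_set_conv_nth mod_less)
  have "a mod length cs < length cs" using nonempty by simp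
  then show False using assms l
    by (auto simp: cyc_adj_iff mod_Suc split: if_splits)
qed

end

section \<open>The wheel\<close>

text \<open>The hypotheses of the theorem.  Within the locale, c n is the n-th cycle vertex modulo k.\<close>
locale tree_wheel =
  fixes V :: "'a set" and E T :: "'a \<Rightarrow> 'a \<Rightarrow> bool" and cs :: "'a list"
  assumes graph: "sgraph V E" and K4: "K4_free E" and tree: "spanning_tree V E T"
    and path_adj: "\<forall>u v w. E u v \<longrightarrow> w \<in> tree_path_inner T u v \<longrightarrow> E u w \<and> E v w"
    and induced: "induced_cycle V E cs" and long: "length cs \<ge> 4"
begin

abbreviation "k \<equiv> length cs"
abbreviation "c \<equiv> cyc cs"

lemma tree_sub: "T a b \<Longrightarrow> E a b"
  using tree by (simp add: spanning_tree_def)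

lemma tree_sym: "T a b \<Longrightarrow> T b a"
  using tree by (simp add: spanning_tree_def is_tree_def sgraph_def)

lemma tree_acyclic: "\<not> (\<exists>xs. is_cycle T xs)"
  using tree by (simp add: spanning_tree_def is_tree_def)

lemma c_distinct: "0 < d \<Longrightarrow> d < k \<Longrightarrow> c (a + d) \<noteq> c a"
  using cyc_eq_iff[OF induced] mod_add_offset_neq by blast

lemma cycle_link:
  "T (c j) (c (Suc j)) \<or> (\<exists>m. T (c j) m \<and> T m (c (Suc j)) \<and> m \<notin> set cs)"
proof -
  have E_sym: "E a b \<Longrightarrow> E b a" for a b using graph by (simp add: sgraph_def)
  have "T (c j) (c (Suc j)) \<or> (\<exists>m. T (c j) m \<and> T m (c (Suc j)))"
    using nontree_edge_midpoint[OF graph K4 tree path_adj cyc_adj[OF induced]] by blast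
  then show ?thesis
    using common_neighbour_off_cycle[OF induced long] tree_sub E_sym by blast
qed

text \<open>No cycle edge is a tree edge: the rest of the cycle would bypass it.\<close>
lemma cycle_edge_not_tree: "\<not> T (c i) (c (Suc i))"
proof
  assume edge: "T (c i) (c (Suc i))"
  let ?T' = "remove_edge T (c i) (c (Suc i))"
  have "?T'\<^sup>*\<^sup>* (c (Suc i + n)) (c (Suc (Suc i + n)))" if "n < k - 1" for n
  proof -
    let ?j = "Suc i + n"
    have "?j mod k \<noteq> i mod k"
      using mod_add_offset_neq[of "Suc n" k i] that by simp
    then have other: "{c ?j, c (Suc ?j)} \<noteq> {c i, c (Suc i)}"
      using cyc_edge_eq[OF induced] by blast
    from cycle_link[of ?j] show ?thesis
    proof
      assume "T (c ?j) (c (Suc ?j))"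
      then have "?T' (c ?j) (c (Suc ?j))" using other unfolding remove_edge_def by blast
      then show ?thesis by (rule r_into_rtranclp)
    next
      assume "\<exists>m. T (c ?j) m \<and> T m (c (Suc ?j)) \<and> m \<notin> set cs"
      then obtain m where "T (c ?j) m" "T m (c (Suc ?j))" "m \<notin> set cs" by blast
      then have "?T' (c ?j) m" "?T' m (c (Suc ?j))"
        using cyc_in_set[OF induced] by (auto simp: remove_edge_def doubleton_eq_iff)
      then show ?thesis by auto
    qed
  qed
  then have "?T'\<^sup>*\<^sup>* (c (Suc i)) (c (Suc i + (k - 1)))"
    using rtranclp_chain[of "k - 1" ?T' "\<lambda>n. c (Suc i + n)"] by simp
  moreover have "Suc i + (k - 1) = i + k" using long by simp
  ultimately have "?T'\<^sup>*\<^sup>* (c (Suc i)) (c i)"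
    using cyc_period[OF induced] by metis
  moreover have "c i \<noteq> c (Suc i)" using c_distinct[of 1 i] long by simp
  ultimately show False using acyclic_edge_is_bridge[OF tree_acyclic edge] by blast
qed

text \<open>Any choice of tree midpoints for the cycle edges is constant: otherwise the walk
  M (i+1), c (i+2), ..., c i, M i, c (i+1) would bypass the tree edge c (i+1) M (i+1).\<close>
lemma midpoints_shared:
  assumes M: "\<And>j. T (c j) (M j) \<and> T (M j) (c (Suc j)) \<and> M j \<notin> set cs"
  shows "M (Suc i) = M i"
proof (rule ccontr)
  assume differ: "M (Suc i) \<noteq> M i"
  let ?x = "c (Suc i)" and ?y = "M (Suc i)"
  let ?T' = "remove_edge T ?x ?y"
  have off: "?y \<notin> set cs" using M by blast
  have keep: "?T' a b" if "T a b" "a \<noteq> ?x" "b \<noteq> ?x" "a \<in> set cs \<or> b \<in> set cs" for a b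
    using that off by (auto simp: remove_edge_def doubleton_eq_iff)
  have on: "c n \<in> set cs" for n by (rule cyc_in_set[OF induced])
  have "?T'\<^sup>*\<^sup>* (c (i + 2 + n)) (c (i + 2 + Suc n))" if "n < k - 2" for n
  proof -
    let ?j = "i + 2 + n"
    have "c ?j \<noteq> ?x" "c (Suc ?j) \<noteq> ?x"
      using c_distinct[of "Suc n" "Suc i"] c_distinct[of "Suc (Suc n)" "Suc i"] that
      by (simp_all add: ac_simps)
    moreover have "M ?j \<noteq> ?x" using M[of ?j] on by metis
    ultimately have "?T' (c ?j) (M ?j)" "?T' (M ?j) (c (Suc ?j))"
      using M[of ?j] on by (auto intro!: keep)
    then show ?thesis by auto
  qed
  then have "?T'\<^sup>*\<^sup>* (c (i + 2)) (c (i + 2 + (k - 2)))"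
    using rtranclp_chain[of "k - 2" ?T' "\<lambda>n. c (i + 2 + n)"] by simp
  moreover have "i + 2 + (k - 2) = i + k" using long by simp
  ultimately have around: "?T'\<^sup>*\<^sup>* (c (i + 2)) (c i)"
    using cyc_period[OF induced] by metis
  have "c (i + 2) \<noteq> ?x" "c i \<noteq> ?x"
    using c_distinct[of 1 "Suc i"] c_distinct[of 1 i] long by simp_all
  then have "?T' ?y (c (i + 2))" "?T' (c i) (M i)"
    using M[of "Suc i"] M[of i] on by (auto intro!: keep)
  moreover have "?T' (M i) ?x"
    using M[of i] on differ by (auto simp: remove_edge_def doubleton_eq_iff)
  ultimately have "?T'\<^sup>*\<^sup>* ?y ?x" using around
    by (meson converse_rtranclp_into_rtranclp rtranclp.rtrancl_into_rtrancl)
  moreover have "?x \<noteq> ?y" using off cyc_in_set[OF induced] by metis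
  ultimately show False using acyclic_edge_is_bridge[OF tree_acyclic] M by blast
qed

text \<open>The common midpoint is the hub of a wheel over the cycle.\<close>
lemma hub_exists: "\<exists>w\<in>V. w \<notin> set cs \<and> (\<forall>x\<in>set cs. E w x)"
proof -
  have "\<forall>j. \<exists>m. T (c j) m \<and> T m (c (Suc j)) \<and> m \<notin> set cs"
    using cycle_link cycle_edge_not_tree by blast
  then obtain M where M: "\<And>j. T (c j) (M j) \<and> T (M j) (c (Suc j)) \<and> M j \<notin> set cs"
    by metis
  have const: "M j = M 0" for j by (induction j) (simp_all add: midpoints_shared[OF M])
  have "M 0 \<in> V" using M[of 0] tree_sub graph by (auto simp: sgraph_def)
  moreover have "E (M 0) x" if "x \<in> set cs" for x
    using set_eq_range_cyc[OF induced that] M const tree_sub tree_sym by metis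
  ultimately show ?thesis using M by blast
qed

end

theorem lemma3:
  fixes V :: "'a set" and E T :: "'a \<Rightarrow> 'a \<Rightarrow> bool" and cs :: "'a list"
  assumes "sgraph V E" and "connected_graph V E" and "K4_free E"
    and "spanning_tree V E T"
    and "\<forall>u v w. E u v \<longrightarrow> w \<in> tree_path_inner T u v \<longrightarrow> E u w \<and> E v w"
    and "induced_cycle V E cs" and "length cs \<ge> 4"
  shows "(\<exists>w\<in>V. w \<notin> set cs \<and> (\<forall>c\<in>set cs. E w c))
         \<and> (\<forall>i<length cs. \<not> T (cs ! i) (cs ! (Suc i mod length cs)))"
proof -
  interpret tree_wheel V E T cs
    using assms by (unfold_locales) blast+
  have "cs ! i = cyc cs i" "cs ! (Suc i mod length cs) = cyc cs (Suc i)" if "i < length cs" for i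
    using that by (simp_all add: cyc_def)
  then show ?thesis using hub_exists cycle_edge_not_tree by auto
qed

end
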